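(* Let $n\geq 3$ and let $u=u_1u_2\cdots u_N$ be a u-p-cycle or a u-p-word for $n$-permutations. If $u_k=\Diamond$, then $u_{k+n}=\Diamond$ and $u_{k-n}=\Diamond$, where in the case of a u-p-word this is asserted only for those of the indices $k+n$, $k-n$ that lie in $\{1,\ldots,N\}$, and in the case of a u-p-cycle the indices are taken modulo $N$.
   Context: An $n$-permutation is a permutation of $\{1,\ldots,n\}$. For a word $w$ of distinct numbers, $\mathrm{red}(w)$ is obtained by replacing the $i$-th smallest letter by $i$. Let $\Diamond$ be a symbol not among the integers. A word $f=f_1\cdots f_n$ over the positive integers together with $\Diamond$, whose integer letters are pairwise distinct, covers an $n$-permutation $\pi$ if one can substitute real numbers for the occurrences of $\Diamond$ (independently) so that the resulting word has $n$ pairwise distinct entries and reduces to $\pi$; equivalently, $f_i<f_j\iff\pi_i<\pi_j$ for all positions $i,j$ holding integers. A u-p-word (universal partial word) for $n$-permutations is a word $u_1\cdots u_N$, $N\geq n$, over this alphabet containing at least one $\Diamond$, such that every factor $u_i\cdots u_{i+n-1}$ ($1\leq i\leq N-n+1$) has pairwise distinct integer letters and every $n$-permutation is covered by exactly one of these factors. A u-p-cycle is a cyclic word $u_1\cdots u_N$, $N\geq n$, containing at least one $\Diamond$, with indices read modulo $N$, satisfying the same conditions for its $N$ cyclic factors $u_iu_{i+1}\cdots u_{i+n-1}$, $1\leq i\leq N$. *)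

theory Defs
  imports Main
begin

text \<open>Letters: None stands for the diamond symbol, Some k for the integer letter k.
  Words are lists; positions are 0-based.\<close>

type_synonym pword = "nat option list"

definition is_nperm :: "nat \<Rightarrow> nat list \<Rightarrow> bool" where
  "is_nperm n p \<longleftrightarrow> length p = n \<and> distinct p \<and> set p = {1..n}"

definition int_letters :: "pword \<Rightarrow> nat list" where
  "int_letters f = map the (filter (\<lambda>x. x \<noteq> None) f)"

definition distinct_ints :: "pword \<Rightarrow> bool" where
  "distinct_ints f \<longleftrightarrow> distinct (int_letters f)"

definition covers :: "pword \<Rightarrow> nat list \<Rightarrow> bool" where
  "covers f p \<longleftrightarrow> length f = length p \<and>
     (\<forall>i<length f. \<forall>j<length f. \<forall>a b. f ! i = Some a \<longrightarrow> f ! j = Some b \<longrightarrow>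
        (a < b \<longleftrightarrow> p ! i < p ! j))"

definition valid_letters :: "pword \<Rightarrow> bool" where
  "valid_letters u \<longleftrightarrow> (\<forall>a. Some a \<in> set u \<longrightarrow> a \<ge> 1) \<and> None \<in> set u"

definition lfactor :: "pword \<Rightarrow> nat \<Rightarrow> nat \<Rightarrow> pword" where
  "lfactor u n i = map (\<lambda>j. u ! (i + j)) [0..<n]"

definition cfactor :: "pword \<Rightarrow> nat \<Rightarrow> nat \<Rightarrow> pword" where
  "cfactor u n i = map (\<lambda>j. u ! ((i + j) mod length u)) [0..<n]"

definition is_upword :: "nat \<Rightarrow> pword \<Rightarrow> bool" where
  "is_upword n u \<longleftrightarrow> length u \<ge> n \<and> valid_letters u \<and>
     (\<forall>i. i + n \<le> length u \<longrightarrow> distinct_ints (lfactor u n i)) \<and>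
     (\<forall>p. is_nperm n p \<longrightarrow> (\<exists>!i. i + n \<le> length u \<and> covers (lfactor u n i) p))"

definition is_upcycle :: "nat \<Rightarrow> pword \<Rightarrow> bool" where
  "is_upcycle n u \<longleftrightarrow> length u \<ge> n \<and> valid_letters u \<and>
     (\<forall>i. i < length u \<longrightarrow> distinct_ints (cfactor u n i)) \<and>
     (\<forall>p. is_nperm n p \<longrightarrow> (\<exists>!i. i < length u \<and> covers (cfactor u n i) p))"

end

theory Submission
  imports Defs
begin

text \<open>View the diamond at position \<open>k\<close> as the first letter of the window starting at \<open>k\<close>, so that
  the window starting at \<open>k + 1\<close> ends at position \<open>k + n\<close>; suppose a letter \<open>a\<close> sits there.
  Take a pattern that agrees with the window at \<open>k + 1\<close> on its first \<open>n - 1\<close> positions. If it is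
  covered by a window \<open>i\<close> that has a predecessor, one more entry can be put in front of it so that
  the extension is covered both at \<open>i - 1\<close> and (thanks to the diamond) at \<open>k\<close>; uniqueness gives
  \<open>i = k + 1\<close>. Putting the last entry of such a pattern on the wrong side of an interior letter
  relative to \<open>a\<close> yields a pattern not covered at \<open>k + 1\<close>, so it is covered by a window without
  predecessor. A cycle has no such window. In a word it is the first window, and comparing the
  patterns it is forced to cover rules out every configuration, using the symmetry that negates
  all letters. The claim about \<open>k - n\<close> follows by reading the word backwards.\<close>

section \<open>Order patterns\<close>

definition rank_in :: "nat \<Rightarrow> (nat \<Rightarrow> int) \<Rightarrow> nat \<Rightarrow> nat" where
  "rank_in n v i = Suc (card {j. j < n \<and> v j < v i})"

definition perm_of_pattern :: "nat \<Rightarrow> (nat \<Rightarrow> int) \<Rightarrow> nat list" where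
  "perm_of_pattern n v = map (rank_in n v) [0..<n]"

lemma rank_in_less_iff:
  assumes "s < n"
  shows "rank_in n v s < rank_in n v t \<longleftrightarrow> v s < v t"
proof
  assume "v s < v t"
  then have "{j. j < n \<and> v j < v s} \<subset> {j. j < n \<and> v j < v t}"
    using assms by auto
  then have "card {j. j < n \<and> v j < v s} < card {j. j < n \<and> v j < v t}"
    by (intro psubset_card_mono) auto
  then show "rank_in n v s < rank_in n v t" by (simp add: rank_in_def)
next
  assume "rank_in n v s < rank_in n v t"
  show "v s < v t"
  proof (rule ccontr)
    assume "\<not> v s < v t"
    then have "card {j. j < n \<and> v j < v t} \<le> card {j. j < n \<and> v j < v s}"
      by (intro card_mono) auto
    with \<open>rank_in n v s < rank_in n v t\<close> show False by (simp add: rank_in_def)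
  qed
qed

lemma rank_in_range:
  assumes "i < n"
  shows "rank_in n v i \<in> {1..n}"
proof -
  have "card {j. j < n \<and> v j < v i} \<le> card ({..<n} - {i})"
    by (intro card_mono) auto
  also have "\<dots> = n - 1" using assms by simp
  finally show ?thesis using assms by (simp add: rank_in_def)
qed

lemma perm_of_pattern_is_nperm:
  assumes inj: "inj_on v {..<n}"
  shows "is_nperm n (perm_of_pattern n v)"
proof -
  have "rank_in n v s \<noteq> rank_in n v t" if "s < n" "t < n" "s \<noteq> t" for s t
  proof -
    have "v s \<noteq> v t" using inj that by (auto dest: inj_onD)
    then have "v s < v t \<or> v t < v s" by auto
    then show ?thesis using rank_in_less_iff that by (metis less_irrefl)
  qed
  then have d: "distinct (perm_of_pattern n v)"
    by (auto simp: perm_of_pattern_def distinct_conv_nth)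
  have "set (perm_of_pattern n v) \<subseteq> {1..n}"
    using rank_in_range by (auto simp: perm_of_pattern_def)
  moreover have "card (set (perm_of_pattern n v)) = n"
    using distinct_card[OF d] by (simp add: perm_of_pattern_def)
  ultimately have "set (perm_of_pattern n v) = {1..n}"
    by (intro card_subset_eq) auto
  with d show ?thesis by (simp add: is_nperm_def perm_of_pattern_def)
qed

lemma distinct_ints_nth_eq:
  "distinct_ints f \<Longrightarrow> s < length f \<Longrightarrow> t < length f \<Longrightarrow> f ! s = Some a \<Longrightarrow> f ! t = Some a \<Longrightarrow> s = t"
proof (induction f arbitrary: s t)
  case Nil
  then show ?case by simp
next
  case (Cons x f)
  have df: "distinct_ints f" and nx: "x \<noteq> None \<Longrightarrow> the x \<notin> set (int_letters f)"
    using Cons.prems(1) by (auto simp: distinct_ints_def int_letters_def split: if_splits)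
  have mem: "j < length f \<Longrightarrow> f ! j = Some a \<Longrightarrow> a \<in> set (int_letters f)" for j
    by (auto simp: int_letters_def in_set_conv_nth[symmetric] intro!: image_eqI[where x="Some a"])
      (metis nth_mem)
  show ?case
    using Cons.prems mem nx Cons.IH[OF df] by (cases s; cases t) auto
qed

section \<open>Covering order patterns by windows of an integer-indexed word\<close>

text \<open>Positions range over the integers, so that words, cycles and their reversals are all
  instances of \<open>W :: int \<Rightarrow> int option\<close>, with \<open>None\<close> for the diamond; a window is given by
  its first position.\<close>

definition covers_at :: "nat \<Rightarrow> (int \<Rightarrow> int option) \<Rightarrow> int \<Rightarrow> (nat \<Rightarrow> int) \<Rightarrow> bool" where
  "covers_at n W i v \<longleftrightarrow> (\<forall>s<n. \<forall>t<n. \<forall>a b. W (i + int s) = Some a \<longrightarrow> W (i + int t) = Some b \<longrightarrow>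
      (a < b \<longleftrightarrow> v s < v t))"

lemma covers_atD:
  "covers_at n W i v \<Longrightarrow> s < n \<Longrightarrow> t < n \<Longrightarrow> W (i + int s) = Some a \<Longrightarrow> W (i + int t) = Some b
   \<Longrightarrow> a < b \<longleftrightarrow> v s < v t"
  unfolding covers_at_def by blast

lemma covers_at_cong:
  assumes "covers_at n W i v"
    and "\<And>s t a b. s < n \<Longrightarrow> t < n \<Longrightarrow> W (i + int s) = Some a \<Longrightarrow> W (i + int t) = Some b
           \<Longrightarrow> v s < v t \<longleftrightarrow> v' s < v' t"
  shows "covers_at n W i v'"
  using assms unfolding covers_at_def by blast

lemma covers_at_shift_eq:
  assumes "\<And>x. W (i + x) = W (j + x)"
  shows "covers_at n W i v \<longleftrightarrow> covers_at n W j v"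
  using assms unfolding covers_at_def by simp

lemma covers_at_of_at_most_one_letter:
  assumes "\<And>s t. s < n \<Longrightarrow> t < n \<Longrightarrow> W (i + int s) \<noteq> None \<Longrightarrow> W (i + int t) \<noteq> None \<Longrightarrow> s = t"
  shows "covers_at n W i v"
  unfolding covers_at_def using assms by fastforce

text \<open>Doubling the values of \<open>v\<close> leaves the odd integers free for the prepended entry.\<close>

definition cons_pattern :: "int \<Rightarrow> (nat \<Rightarrow> int) \<Rightarrow> nat \<Rightarrow> int" where
  "cons_pattern x v s = (if s = 0 then x else 2 * v (s - 1))"

lemma inj_on_cons_pattern:
  assumes "inj_on v {..<n}" "odd x"
  shows "inj_on (cons_pattern x v) {..<n}"
proof (rule inj_onI)
  fix s t assume st: "s \<in> {..<n}" "t \<in> {..<n}" and eq: "cons_pattern x v s = cons_pattern x v t"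
  show "s = t"
  proof (cases "s = 0 \<or> t = 0")
    case True
    with eq assms(2) show ?thesis by (auto simp: cons_pattern_def split: if_splits)
  next
    case False
    with eq have "v (s - 1) = v (t - 1)" by (simp add: cons_pattern_def)
    then have "s - 1 = t - 1" using inj_onD[OF assms(1)] st by auto
    with False show ?thesis by arith
  qed
qed

lemma covers_at_cons_pattern_diamond:
  assumes "W k = None" "covers_at (n - 1) W (k + 1) v"
  shows "covers_at n W k (cons_pattern x v)"
  unfolding covers_at_def
proof (intro allI impI)
  fix s t a b
  assume s: "s < n" and t: "t < n" and a: "W (k + int s) = Some a" and b: "W (k + int t) = Some b"
  obtain s' t' where st: "s = Suc s'" "t = Suc t'"
    using a b assms(1) by (cases s; cases t) auto
  have "W (k + 1 + int s') = Some a" "W (k + 1 + int t') = Some b"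
    using a b st by (simp_all add: algebra_simps)
  then have "a < b \<longleftrightarrow> v s' < v t'"
    using covers_atD[OF assms(2)] s t st by simp
  then show "a < b \<longleftrightarrow> cons_pattern x v s < cons_pattern x v t"
    using st by (simp add: cons_pattern_def)
qed

lemma covers_at_separating_value:
  assumes cov: "covers_at n W i v"
  obtains M where "\<And>t b. t < n \<Longrightarrow> W (i + int t) = Some b \<Longrightarrow> b < c \<Longrightarrow> v t \<le> M"
    and "\<And>t b. t < n \<Longrightarrow> W (i + int t) = Some b \<Longrightarrow> c < b \<Longrightarrow> M < v t"
proof -
  define Lo where "Lo = {v t |t b. t < n \<and> W (i + int t) = Some b \<and> b < c}"
  define M where "M = Max (insert (Min (v ` {..<n}) - 1) Lo)"
  have fin: "finite (insert (Min (v ` {..<n}) - 1) Lo)"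
  proof -
    have "Lo \<subseteq> v ` {..<n}" unfolding Lo_def by auto
    then show ?thesis by (simp add: finite_subset)
  qed
  have "v t \<le> M" if "t < n" "W (i + int t) = Some b" "b < c" for t b
  proof -
    have "v t \<in> Lo" unfolding Lo_def using that by blast
    then show ?thesis unfolding M_def using fin by simp
  qed
  moreover have "M < v t" if t: "t < n" and b: "W (i + int t) = Some b" and "c < b" for t b
  proof -
    have "M \<in> insert (Min (v ` {..<n}) - 1) Lo" unfolding M_def by (rule Max_in[OF fin]) simp
    then show ?thesis
    proof
      assume "M = Min (v ` {..<n}) - 1"
      moreover have "Min (v ` {..<n}) \<le> v t" using t by (intro Min_le) auto
      ultimately show ?thesis by simp
    next
      assume "M \<in> Lo"
      then obtain t' b' where t': "M = v t'" "t' < n" "W (i + int t') = Some b'" "b' < c"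
        unfolding Lo_def by auto
      then have "b' < b \<longleftrightarrow> v t' < v t"
        using covers_atD[OF cov _ t t'(3) b] by simp
      then show ?thesis using t' \<open>c < b\<close> by simp
    qed
  qed
  ultimately show ?thesis using that by blast
qed

lemma covers_at_cons_pattern:
  assumes cov: "covers_at n W i v"
    and fresh: "\<And>t b c. t < n - 1 \<Longrightarrow> W (i + int t) = Some b \<Longrightarrow> W (i - 1) = Some c \<Longrightarrow> b \<noteq> c"
  obtains x where "odd x" "covers_at n W (i - 1) (cons_pattern x v)"
proof -
  obtain M where
    below: "\<And>t b. t < n \<Longrightarrow> W (i + int t) = Some b \<Longrightarrow> b < the (W (i - 1)) \<Longrightarrow> v t \<le> M" and
    above: "\<And>t b. t < n \<Longrightarrow> W (i + int t) = Some b \<Longrightarrow> the (W (i - 1)) < b \<Longrightarrow> M < v t"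
    using covers_at_separating_value[OF cov] by blast
  have key: "(b < c \<longrightarrow> v t \<le> M) \<and> (c < b \<longrightarrow> M < v t)"
    if "t < n - 1" "W (i + int t) = Some b" "W (i - 1) = Some c" for t b c
    using below[of t b] above[of t b] that by simp
  have "covers_at n W (i - 1) (cons_pattern (2 * M + 1) v)"
    unfolding covers_at_def
  proof (intro allI impI)
    fix s t a b
    assume s: "s < n" and t: "t < n" and a: "W (i - 1 + int s) = Some a" and b: "W (i - 1 + int t) = Some b"
    have shift: "W (i - 1 + int (Suc r)) = W (i + int r)" for r
      by (simp add: algebra_simps)
    show "a < b \<longleftrightarrow> cons_pattern (2 * M + 1) v s < cons_pattern (2 * M + 1) v t"
    proof (cases s; cases t)
      fix t' assume st: "s = 0" "t = Suc t'"
      have t': "t' < n - 1" and a': "W (i - 1) = Some a" and b': "W (i + int t') = Some b"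
        using t a b st shift by simp_all
      show ?thesis
        using key[OF t' b' a'] fresh[OF t' b' a'] st by (cases "a < b") (auto simp: cons_pattern_def)
    next
      fix s' assume st: "s = Suc s'" "t = 0"
      have s': "s' < n - 1" and a': "W (i + int s') = Some a" and b': "W (i - 1) = Some b"
        using s a b st shift by simp_all
      show ?thesis
        using key[OF s' a' b'] fresh[OF s' a' b'] st by (cases "a < b") (auto simp: cons_pattern_def)
    next
      fix s' t' assume "s = Suc s'" "t = Suc t'"
      then show ?thesis
        using covers_atD[OF cov, of s' t' a b] a b s t shift by (auto simp: cons_pattern_def)
    qed (use a b in auto)
  qed
  then show ?thesis using that[of "2 * M + 1"] by simp
qed

text \<open>The windows of a partial word or cycle in the abstract: \<open>I\<close> is the set of admissible window
  starts and \<open>eqv\<close> identifies starts denoting the same window (equality for words, congruence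
  modulo the length for cycles). Patterns are represented by injective \<open>v :: nat \<Rightarrow> int\<close>.\<close>

locale pattern_cover =
  fixes n :: nat and W :: "int \<Rightarrow> int option" and I :: "int set" and eqv :: "int \<Rightarrow> int \<Rightarrow> bool"
  assumes n_ge_3: "n \<ge> 3"
    and window_distinct: "\<And>i s t a. i \<in> I \<Longrightarrow> s < n \<Longrightarrow> t < n \<Longrightarrow>
      W (i + int s) = Some a \<Longrightarrow> W (i + int t) = Some a \<Longrightarrow> s = t"
    and pattern_covered: "\<And>v. inj_on v {..<n} \<Longrightarrow> \<exists>i\<in>I. covers_at n W i v"
    and cover_unique: "\<And>v i j. inj_on v {..<n} \<Longrightarrow> i \<in> I \<Longrightarrow> j \<in> I \<Longrightarrow>
      covers_at n W i v \<Longrightarrow> covers_at n W j v \<Longrightarrow> eqv i j"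
    and eqv_shift: "\<And>i j x. eqv i j \<Longrightarrow> W (i + x) = W (j + x)"
    and not_eqv_succ: "\<And>i. \<not> eqv i (i + 1)"
    and not_succ_eqv: "\<And>i. \<not> eqv (i + 1) i"
begin

lemma last_position_of_succ: "k + 1 + int (n - 1) = k + int n"
  using n_ge_3 by simp

lemma cover_passes_diamond:
  assumes k: "k \<in> I" "W k = None" and v: "inj_on v {..<n}" "covers_at (n - 1) W (k + 1) v"
    and i: "i \<in> I" "i - 1 \<in> I" "covers_at n W i v"
  shows "covers_at n W (k + 1) v"
proof -
  have fresh: "b \<noteq> c" if "t < n - 1" "W (i + int t) = Some b" "W (i - 1) = Some c" for t b c
  proof
    assume "b = c"
    then have "W (i - 1 + int (Suc t)) = Some c" "W (i - 1 + int 0) = Some c"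
      using that by (simp_all add: algebra_simps)
    moreover have "Suc t < n" using that(1) by simp
    ultimately show False using window_distinct[OF i(2), of "Suc t" 0 c] by simp
  qed
  obtain x where x: "odd x" "covers_at n W (i - 1) (cons_pattern x v)"
    using covers_at_cons_pattern[OF i(3)] fresh by blast
  have "eqv (i - 1) k"
    using cover_unique[OF inj_on_cons_pattern[OF v(1) x(1)] i(2) k(1) x(2)
        covers_at_cons_pattern_diamond[OF k(2) v(2)]] .
  then have "W (i + y) = W (k + 1 + y)" for y
    using eqv_shift[of "i - 1" k "1 + y"] by (simp add: algebra_simps)
  then show ?thesis using i(3) covers_at_shift_eq by blast
qed

lemma covered_at_start_if_not_at_succ:
  assumes "k \<in> I" "W k = None" "inj_on v {..<n}" "covers_at (n - 1) W (k + 1) v"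
    and "\<not> covers_at n W (k + 1) v"
  obtains i where "i \<in> I" "i - 1 \<notin> I" "covers_at n W i v"
  using pattern_covered[OF assms(3)] cover_passes_diamond[OF assms(1-4)] assms(5) by blast

definition letter_bound :: "int \<Rightarrow> int" where
  "letter_bound i = (\<Sum>s<n. case W (i + int s) of Some b \<Rightarrow> \<bar>b\<bar> | None \<Rightarrow> 0)"

lemma letter_bound_nonneg: "0 \<le> letter_bound i"
  unfolding letter_bound_def by (intro sum_nonneg) (simp split: option.split)

lemma abs_le_letter_bound:
  assumes "s < n" "W (i + int s) = Some b"
  shows "\<bar>b\<bar> \<le> letter_bound i"
proof -
  have "(case W (i + int s) of Some b \<Rightarrow> \<bar>b\<bar> | None \<Rightarrow> 0) \<le> letter_bound i"
    unfolding letter_bound_def using assms(1) by (intro member_le_sum) (auto split: option.split)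
  then show ?thesis using assms(2) by simp
qed

definition window_pattern :: "int \<Rightarrow> nat \<Rightarrow> int" where
  "window_pattern i s =
     (case W (i + int s) of Some b \<Rightarrow> 2 * b | None \<Rightarrow> 2 * letter_bound i + 2 + 2 * int s)"

lemma window_pattern_bounds:
  "s < n \<Longrightarrow> - 2 * letter_bound i \<le> window_pattern i s \<and> window_pattern i s \<le> 2 * letter_bound i + 2 * int n"
  using abs_le_letter_bound[of s i] letter_bound_nonneg[of i]
  unfolding window_pattern_def by (cases "W (i + int s)") auto

lemma even_window_pattern: "even (window_pattern i s)"
  unfolding window_pattern_def by (cases "W (i + int s)") auto

lemma covers_at_window_pattern: "covers_at n W i (window_pattern i)"
  unfolding covers_at_def window_pattern_def by auto

lemma inj_on_window_pattern:
  assumes "i \<in> I"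
  shows "inj_on (window_pattern i) {..<n}"
proof (rule inj_onI)
  fix s t assume s: "s \<in> {..<n}" and t: "t \<in> {..<n}" and e: "window_pattern i s = window_pattern i t"
  show "s = t"
  proof (cases "W (i + int s)"; cases "W (i + int t)")
    fix a b assume "W (i + int s) = Some a" "W (i + int t) = Some b"
    then show ?thesis using e window_distinct[OF assms, of s t a] s t by (simp add: window_pattern_def)
  next
    fix a assume "W (i + int s) = Some a" "W (i + int t) = None"
    then show ?thesis using e abs_le_letter_bound[of s i a] s by (simp add: window_pattern_def)
  next
    fix b assume "W (i + int s) = None" "W (i + int t) = Some b"
    then show ?thesis using e abs_le_letter_bound[of t i b] t by (simp add: window_pattern_def)
  qed (use e in \<open>simp add: window_pattern_def\<close>)
qed

text \<open>Letters enter \<open>window_pattern\<close> doubled, so the last entry \<open>2 x + 1\<close> lies above exactly the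
  letters \<open>\<le> x\<close>.\<close>

definition tail_pattern :: "int \<Rightarrow> int \<Rightarrow> nat \<Rightarrow> int" where
  "tail_pattern k x s = (if s < n - 1 then window_pattern (k + 1) s else 2 * x + 1)"

lemma inj_on_tail_pattern:
  assumes "k + 1 \<in> I"
  shows "inj_on (tail_pattern k x) {..<n}"
proof (rule inj_onI)
  fix s t assume st: "s \<in> {..<n}" "t \<in> {..<n}" and e: "tail_pattern k x s = tail_pattern k x t"
  have "window_pattern (k + 1) r \<noteq> 2 * x + 1" for r
    using even_window_pattern[of "k + 1" r] by auto
  then show "s = t"
    using e st inj_onD[OF inj_on_window_pattern[OF assms], of s t]
    by (auto simp: tail_pattern_def split: if_splits)
qed

lemma covers_at_tail_pattern: "covers_at (n - 1) W (k + 1) (tail_pattern k x)"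
  unfolding covers_at_def tail_pattern_def window_pattern_def by auto

lemma interior_letter_ne_last:
  assumes "k + 1 \<in> I" "W (k + int n) = Some a" "j < n - 1" "W (k + 1 + int j) = Some b"
  shows "b \<noteq> a"
  using window_distinct[OF assms(1), of j "n - 1" a] assms last_position_of_succ by auto

lemma tail_pattern_covers_succ:
  assumes k: "k + 1 \<in> I" "W (k + int n) = Some a"
  shows "covers_at n W (k + 1) (tail_pattern k a)"
  unfolding covers_at_def
proof (intro allI impI)
  fix s t x y assume s: "s < n" and t: "t < n"
    and x: "W (k + 1 + int s) = Some x" and y: "W (k + 1 + int t) = Some y"
  have last: "W (k + 1 + int (n - 1)) = Some a" using k(2) last_position_of_succ by simp
  have "x \<noteq> a" if "s < n - 1" using interior_letter_ne_last[OF k that x] .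
  moreover have "y \<noteq> a" if "t < n - 1" using interior_letter_ne_last[OF k that y] .
  moreover have "x = a" if "\<not> s < n - 1"
  proof -
    have "s = n - 1" using that s by simp
    then show ?thesis using x last by simp
  qed
  moreover have "y = a" if "\<not> t < n - 1"
  proof -
    have "t = n - 1" using that t by simp
    then show ?thesis using y last by simp
  qed
  ultimately show "x < y \<longleftrightarrow> tail_pattern k a s < tail_pattern k a t"
    using x y by (auto simp: tail_pattern_def window_pattern_def)
qed

lemma tail_pattern_covered_at_start:
  assumes k: "k \<in> I" "k + 1 \<in> I" "W k = None" "W (k + int n) = Some a"
    and j: "j < n - 1" "W (k + 1 + int j) = Some b" and sep: "b < a \<longleftrightarrow> x < b"
  obtains i where "i \<in> I" "i - 1 \<notin> I" "covers_at n W i (tail_pattern k x)"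
proof (rule covered_at_start_if_not_at_succ[OF k(1,3) inj_on_tail_pattern[OF k(2)] covers_at_tail_pattern])
  show "\<not> covers_at n W (k + 1) (tail_pattern k x)"
  proof
    assume "covers_at n W (k + 1) (tail_pattern k x)"
    moreover have "W (k + 1 + int (n - 1)) = Some a" using k(4) last_position_of_succ by simp
    moreover have "j < n" "n - 1 < n" using j(1) by auto
    ultimately have "b < a \<longleftrightarrow> tail_pattern k x j < tail_pattern k x (n - 1)"
      using covers_atD j(2) by blast
    then show False using j sep by (auto simp: tail_pattern_def window_pattern_def)
  qed
qed

lemma gap_succ_window_has_letter:
  assumes k: "k \<in> I" "k + 1 \<in> I" "W k = None"
  obtains j b where "j < n - 1" "W (k + 1 + int j) = Some b"
proof (cases "\<exists>j<n - 1. W (k + 1 + int j) \<noteq> None")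
  case True
  then show ?thesis using that by blast
next
  case False
  then have none: "W (k + 1 + int s) = None" if "s < n - 1" for s
    using that by simp
  have "W (k + int s) = None" if "s < n" for s
    using none[of "s - 1"] k(3) that by (cases s) (auto simp: algebra_simps)
  then have "covers_at n W k int"
    by (intro covers_at_of_at_most_one_letter) auto
  moreover have "covers_at n W (k + 1) int"
  proof (rule covers_at_of_at_most_one_letter)
    fix s t assume "s < n" "t < n" "W (k + 1 + int s) \<noteq> None" "W (k + 1 + int t) \<noteq> None"
    then show "s = t" using none[of s] none[of t] by (cases "s < n - 1"; cases "t < n - 1") auto
  qed
  ultimately have False
    using cover_unique[of int k "k + 1"] k not_eqv_succ by (auto simp: inj_on_def)
  then show ?thesis ..
qed

lemma no_gap_if_pred_closed:
  assumes closed: "\<And>i. i \<in> I \<Longrightarrow> i - 1 \<in> I"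
    and k: "k \<in> I" "k + 1 \<in> I" "W k = None" "W (k + int n) = Some a"
  shows False
proof -
  obtain j b where j: "j < n - 1" "W (k + 1 + int j) = Some b"
    using gap_succ_window_has_letter[OF k(1-3)] .
  have "j < n" using j(1) by simp
  then have "\<bar>b\<bar> \<le> letter_bound (k + 1)" using abs_le_letter_bound j(2) by blast
  moreover have "b \<noteq> a" using interior_letter_ne_last[OF k(2,4) j] .
  moreover define x where
    "x = (if a < b then letter_bound (k + 1) + int n else - letter_bound (k + 1) - 1)"
  ultimately have "b < a \<longleftrightarrow> x < b" by auto
  then obtain i where "i \<in> I" "i - 1 \<notin> I"
    using tail_pattern_covered_at_start[OF k j] by blast
  with closed show False by blast
qed

lemma least_interior_letter:
  assumes "j < n - 1" "W (k + 1 + int j) = Some b"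
  obtains q m where "q < n - 1" "W (k + 1 + int q) = Some m"
    "\<And>j b. j < n - 1 \<Longrightarrow> W (k + 1 + int j) = Some b \<Longrightarrow> m \<le> b"
proof -
  define S where "S = {b. \<exists>j<n-1. W (k + 1 + int j) = Some b}"
  have "S \<subseteq> (\<lambda>j. the (W (k + 1 + int j))) ` {..<n-1}"
    unfolding S_def by force
  then have fin: "finite S" by (rule finite_subset) simp
  have "Min S \<in> S" using fin assms unfolding S_def by (intro Min_in) auto
  then obtain q where "q < n - 1" "W (k + 1 + int q) = Some (Min S)" unfolding S_def by blast
  moreover have "Min S \<le> b" if "j < n - 1" "W (k + 1 + int j) = Some b" for j b
    using that fin unfolding S_def by (intro Min_le) auto
  ultimately show ?thesis using that by blast
qed

end

lemma covers_at_negate: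
  "covers_at n (\<lambda>x. map_option uminus (W x)) i v \<longleftrightarrow> covers_at n W i (\<lambda>s. - v s)"
proof
  assume h: "covers_at n (\<lambda>x. map_option uminus (W x)) i v"
  show "covers_at n W i (\<lambda>s. - v s)"
    unfolding covers_at_def
  proof (intro allI impI)
    fix s t a b assume "s < n" "t < n" "W (i + int s) = Some a" "W (i + int t) = Some b"
    then have "- b < - a \<longleftrightarrow> v t < v s" using covers_atD[OF h, of t s "- b" "- a"] by simp
    then show "a < b \<longleftrightarrow> - v s < - v t" by simp
  qed
next
  assume h: "covers_at n W i (\<lambda>s. - v s)"
  show "covers_at n (\<lambda>x. map_option uminus (W x)) i v"
    unfolding covers_at_def
  proof (intro allI impI)
    fix s t a b assume st: "s < n" "t < n" and a: "map_option uminus (W (i + int s)) = Some a"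
      and b: "map_option uminus (W (i + int t)) = Some b"
    from a obtain a' where a': "W (i + int s) = Some a'" "a = - a'" by auto
    from b obtain b' where b': "W (i + int t) = Some b'" "b = - b'" by auto
    have "b' < a' \<longleftrightarrow> - v t < - v s" using covers_atD[OF h st(2,1) b'(1) a'(1)] .
    then show "a < b \<longleftrightarrow> v s < v t" using a' b' by auto
  qed
qed

lemma pattern_cover_negate:
  assumes "pattern_cover n W I eqv"
  shows "pattern_cover n (\<lambda>x. map_option uminus (W x)) I eqv"
proof -
  interpret pattern_cover n W I eqv by fact
  have neg_inj: "inj_on (\<lambda>s. - v s) {..<n}" if "inj_on v {..<n}" for v :: "nat \<Rightarrow> int"
    using that by (auto simp: inj_on_def)
  show ?thesis
  proof
    show "\<exists>i\<in>I. covers_at n (\<lambda>x. map_option uminus (W x)) i v" if "inj_on v {..<n}" for v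
      using pattern_covered[OF neg_inj[OF that]] by (auto simp: covers_at_negate)
    show "eqv i j" if "inj_on v {..<n}" "i \<in> I" "j \<in> I"
      "covers_at n (\<lambda>x. map_option uminus (W x)) i v" "covers_at n (\<lambda>x. map_option uminus (W x)) j v"
      for v i j
      using cover_unique[OF neg_inj[OF that(1)]] that(2-5) by (auto simp: covers_at_negate)
  qed (use n_ge_3 window_distinct eqv_shift not_eqv_succ not_succ_eqv in auto)
qed

lemma covers_at_reverse:
  "covers_at n (\<lambda>x. W (- x)) i v \<longleftrightarrow> covers_at n W (- i - int n + 1) (\<lambda>s. v (n - 1 - s))"
proof
  assume h: "covers_at n (\<lambda>x. W (- x)) i v"
  show "covers_at n W (- i - int n + 1) (\<lambda>s. v (n - 1 - s))"
    unfolding covers_at_def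
  proof (intro allI impI)
    fix s t a b assume st: "s < n" "t < n" and a: "W (- i - int n + 1 + int s) = Some a"
      and b: "W (- i - int n + 1 + int t) = Some b"
    have es: "- (i + int (n - 1 - s)) = - i - int n + 1 + int s"
      and et: "- (i + int (n - 1 - t)) = - i - int n + 1 + int t"
      using st by (simp_all add: of_nat_diff)
    have "W (- (i + int (n - 1 - s))) = Some a" "W (- (i + int (n - 1 - t))) = Some b"
      unfolding es et using a b by simp_all
    moreover have "n - 1 - s < n" "n - 1 - t < n" using st by auto
    ultimately show "a < b \<longleftrightarrow> v (n - 1 - s) < v (n - 1 - t)"
      using covers_atD[OF h] by blast
  qed
next
  assume h: "covers_at n W (- i - int n + 1) (\<lambda>s. v (n - 1 - s))"
  show "covers_at n (\<lambda>x. W (- x)) i v"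
    unfolding covers_at_def
  proof (intro allI impI)
    fix s t a b assume st: "s < n" "t < n" and a: "W (- (i + int s)) = Some a"
      and b: "W (- (i + int t)) = Some b"
    have es: "- i - int n + 1 + int (n - 1 - s) = - (i + int s)"
      and et: "- i - int n + 1 + int (n - 1 - t) = - (i + int t)"
      using st by (simp_all add: of_nat_diff)
    have "W (- i - int n + 1 + int (n - 1 - s)) = Some a" "W (- i - int n + 1 + int (n - 1 - t)) = Some b"
      unfolding es et using a b by simp_all
    moreover have "n - 1 - s < n" "n - 1 - t < n" using st by auto
    ultimately have "a < b \<longleftrightarrow> v (n - 1 - (n - 1 - s)) < v (n - 1 - (n - 1 - t))"
      using covers_atD[OF h] by blast
    then show "a < b \<longleftrightarrow> v s < v t" using st by simp
  qed
qed

lemma pattern_cover_reverse: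
  assumes "pattern_cover n W I eqv"
  shows "pattern_cover n (\<lambda>x. W (- x)) ((\<lambda>i. - i - int n + 1) ` I)
    (\<lambda>i j. eqv (- i - int n + 1) (- j - int n + 1))"
proof -
  interpret pattern_cover n W I eqv by fact
  have rev_inj: "inj_on (\<lambda>s. v (n - 1 - s)) {..<n}" if "inj_on v {..<n}" for v :: "nat \<Rightarrow> int"
  proof (rule inj_onI)
    fix s t assume "s \<in> {..<n}" "t \<in> {..<n}" "v (n - 1 - s) = v (n - 1 - t)"
    then have "n - 1 - s = n - 1 - t" using inj_onD[OF that] by auto
    then show "s = t" using \<open>s \<in> {..<n}\<close> \<open>t \<in> {..<n}\<close> by simp
  qed
  show ?thesis
  proof
    show "s = t" if "i \<in> (\<lambda>i. - i - int n + 1) ` I" "s < n" "t < n" "W (- (i + int s)) = Some a"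
      "W (- (i + int t)) = Some a" for i s t a
    proof -
      from that(1) obtain i0 where i0: "i0 \<in> I" "i = - i0 - int n + 1" by auto
      have es: "i0 + int (n - 1 - s) = - (i + int s)" and et: "i0 + int (n - 1 - t) = - (i + int t)"
        using that(2,3) i0(2) by (simp_all add: of_nat_diff)
      have "W (i0 + int (n - 1 - s)) = Some a" "W (i0 + int (n - 1 - t)) = Some a"
        unfolding es et using that(4,5) by simp_all
      then have "n - 1 - s = n - 1 - t"
        using window_distinct[OF i0(1), of "n - 1 - s" "n - 1 - t" a] that(2,3) by simp
      then show "s = t" using that(2,3) by simp
    qed
    show "\<exists>i\<in>(\<lambda>i. - i - int n + 1) ` I. covers_at n (\<lambda>x. W (- x)) i v" if v: "inj_on v {..<n}" for v
    proof -
      obtain i where "i \<in> I" "covers_at n W i (\<lambda>s. v (n - 1 - s))"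
        using pattern_covered[OF rev_inj[OF v]] by blast
      then have "covers_at n (\<lambda>x. W (- x)) (- i - int n + 1) v"
        using covers_at_reverse[of n W "- i - int n + 1" v] by simp
      then show ?thesis using \<open>i \<in> I\<close> by blast
    qed
    show "eqv (- i - int n + 1) (- j - int n + 1)" if "inj_on v {..<n}"
      "i \<in> (\<lambda>i. - i - int n + 1) ` I" "j \<in> (\<lambda>i. - i - int n + 1) ` I"
      "covers_at n (\<lambda>x. W (- x)) i v" "covers_at n (\<lambda>x. W (- x)) j v" for v i j
      using cover_unique[OF rev_inj[OF that(1)]] that(2-5) covers_at_reverse[of n W] by auto
    show "W (- (i + x)) = W (- (j + x))" if "eqv (- i - int n + 1) (- j - int n + 1)" for i j x
      using eqv_shift[OF that, of "- x + int n - 1"] by (simp add: algebra_simps)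
    show "\<not> eqv (- i - int n + 1) (- (i + 1) - int n + 1)" for i
      using not_succ_eqv[of "- i - int n"] by (simp add: algebra_simps)
    show "\<not> eqv (- (i + 1) - int n + 1) (- i - int n + 1)" for i
      using not_eqv_succ[of "- i - int n"] by (simp add: algebra_simps)
  qed (rule n_ge_3)
qed

locale interval_cover = pattern_cover n W "{L..R}" "(=)"
  for n :: nat and W :: "int \<Rightarrow> int option" and L R :: int

lemma interval_cover_negate:
  "interval_cover n W L R \<Longrightarrow> interval_cover n (\<lambda>x. map_option uminus (W x)) L R"
  unfolding interval_cover_def by (rule pattern_cover_negate)

lemma interval_cover_reverse:
  assumes "interval_cover n W L R"
  shows "interval_cover n (\<lambda>x. W (- x)) (- R - int n + 1) (- L - int n + 1)"
proof -
  have "(\<lambda>i. - i - int n + 1) ` {L..R} = {- R - int n + 1 .. - L - int n + 1}"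
  proof (intro set_eqI iffI)
    fix x assume "x \<in> {- R - int n + 1 .. - L - int n + 1}"
    then show "x \<in> (\<lambda>i. - i - int n + 1) ` {L..R}"
      by (intro image_eqI[of _ _ "- x - int n + 1"]) auto
  qed auto
  moreover have "(\<lambda>i j. (- i - int n + 1) = (- j - int n + 1)) = (=)"
    by (intro ext) auto
  ultimately show ?thesis
    using pattern_cover_reverse[of n W "{L..R}" "(=)"] assms unfolding interval_cover_def by simp
qed

context interval_cover
begin

lemma tail_pattern_covered_at_first:
  assumes k: "k \<in> {L..R}" "k + 1 \<in> {L..R}" "W k = None" "W (k + int n) = Some a"
    and j: "j < n - 1" "W (k + 1 + int j) = Some b" and sep: "b < a \<longleftrightarrow> x < b"
  shows "covers_at n W L (tail_pattern k x)"
proof -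
  obtain i where "i \<in> {L..R}" "i - 1 \<notin> {L..R}" "covers_at n W i (tail_pattern k x)"
    using tail_pattern_covered_at_start[OF k j sep] .
  moreover from calculation(1,2) have "i = L" by auto
  ultimately show ?thesis by simp
qed

lemma tail_pattern_not_covered_at_first:
  assumes k: "k \<in> {L..R}" "k + 1 \<in> {L..R}" "W (k + int n) = Some a"
  shows "\<not> covers_at n W L (tail_pattern k a)"
proof
  assume "covers_at n W L (tail_pattern k a)"
  then have "L = k + 1"
    using cover_unique[OF inj_on_tail_pattern[OF k(2)] _ k(2) _ tail_pattern_covers_succ[OF k(2,3)]] k(1)
    by auto
  with k(1) show False by simp
qed

lemma tail_pattern_extremes:
  assumes "s < n - 1"
  shows "tail_pattern k (- letter_bound (k + 1) - 1) (n - 1) < tail_pattern k x s"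
    and "tail_pattern k x s < tail_pattern k (letter_bound (k + 1) + int n) (n - 1)"
proof -
  have "s < n" using assms by simp
  from window_pattern_bounds[OF this, of "k + 1"] assms
  show "tail_pattern k (- letter_bound (k + 1) - 1) (n - 1) < tail_pattern k x s"
    "tail_pattern k x s < tail_pattern k (letter_bound (k + 1) + int n) (n - 1)"
    by (auto simp: tail_pattern_def)
qed

lemma interior_letter_bounds:
  assumes "j < n - 1" "W (k + 1 + int j) = Some b"
  shows "- letter_bound (k + 1) - 1 < b" and "b < letter_bound (k + 1) + int n"
proof -
  have "\<bar>b\<bar> \<le> letter_bound (k + 1)" using abs_le_letter_bound[of j "k + 1" b] assms by simp
  then show "- letter_bound (k + 1) - 1 < b" "b < letter_bound (k + 1) + int n"
    using n_ge_3 by auto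
qed

text \<open>The extreme patterns, with last entry above resp. below the rest, are both covered by the
  first window; hence that window has no letter both at its last position and before it, and it
  would also cover the pattern that the window at \<open>k + 1\<close> covers.\<close>

lemma no_gap_two_sided:
  assumes k: "k \<in> {L..R}" "k + 1 \<in> {L..R}" "W k = None" "W (k + int n) = Some a"
    and j1: "j1 < n - 1" "W (k + 1 + int j1) = Some b1" "a < b1"
    and j2: "j2 < n - 1" "W (k + 1 + int j2) = Some b2" "b2 < a"
  shows False
proof -
  define top where "top = letter_bound (k + 1) + int n"
  define bot where "bot = - letter_bound (k + 1) - 1"
  have cT: "covers_at n W L (tail_pattern k top)"
    using tail_pattern_covered_at_first[OF k j1(1,2)] j1(3) interior_letter_bounds[OF j1(1,2)]
    unfolding top_def by simp
  have cB: "covers_at n W L (tail_pattern k bot)"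
    using tail_pattern_covered_at_first[OF k j2(1,2)] j2(3) interior_letter_bounds[OF j2(1,2)]
    unfolding bot_def by simp
  have mixed: False if "s < n - 1" "W (L + int s) = Some x" "W (L + int (n - 1)) = Some y" for s x y
  proof -
    have "s < n" "n - 1 < n" using that(1) by auto
    then show False
      using covers_atD[OF cT _ _ that(2,3)] covers_atD[OF cB _ _ that(2,3)]
        tail_pattern_extremes(1)[OF that(1), of k bot] tail_pattern_extremes(2)[OF that(1), of k top]
      unfolding top_def bot_def by auto
  qed
  have "covers_at n W L (tail_pattern k a)"
  proof (rule covers_at_cong[OF cT])
    fix s t x y assume st: "s < n" "t < n" and xy: "W (L + int s) = Some x" "W (L + int t) = Some y"
    show "tail_pattern k top s < tail_pattern k top t \<longleftrightarrow> tail_pattern k a s < tail_pattern k a t"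
    proof (cases "s < n - 1"; cases "t < n - 1")
      assume "s < n - 1" "\<not> t < n - 1"
      moreover from this have "t = n - 1" using st by simp
      ultimately have False using mixed[of s x y] xy by simp
      then show ?thesis ..
    next
      assume "\<not> s < n - 1" "t < n - 1"
      moreover from this have "s = n - 1" using st by simp
      ultimately have False using mixed[of t y x] xy by simp
      then show ?thesis ..
    qed (use st in \<open>auto simp: tail_pattern_def\<close>)
  qed
  with tail_pattern_not_covered_at_first[OF k(1,2,4)] show False by simp
qed

lemma window_pattern_above_least:
  assumes "k + 1 \<in> {L..R}" and q: "q < n - 1" "W (k + 1 + int q) = Some m"
    and least: "\<And>j b. j < n - 1 \<Longrightarrow> W (k + 1 + int j) = Some b \<Longrightarrow> m \<le> b"
    and s: "s < n - 1" "s \<noteq> q"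
  shows "2 * m + 1 < window_pattern (k + 1) s"
proof (cases "W (k + 1 + int s)")
  case (Some b)
  have "s < n" "q < n" using q(1) s(1) by auto
  then have "b \<noteq> m" using window_distinct[OF assms(1), of s q m] q s Some by auto
  then show ?thesis using least[OF s(1) Some] Some by (simp add: window_pattern_def)
next
  case None
  have "\<bar>m\<bar> \<le> letter_bound (k + 1)" using abs_le_letter_bound[of q "k + 1" m] q by simp
  then show ?thesis using None by (simp add: window_pattern_def)
qed

text \<open>If all interior letters of the window at \<open>k + 1\<close> exceed its last letter \<open>a\<close> and \<open>m\<close> is the
  least of them, at position \<open>q\<close>, the first window must cover both the pattern with the last entry
  on top and the pattern with the last entry just above \<open>m\<close>, but not the one with the last entry
  just above \<open>a\<close>. This pins down its shape.\<close>

lemma first_window_shape: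
  assumes k: "k \<in> {L..R}" "k + 1 \<in> {L..R}" "W k = None" "W (k + int n) = Some a"
    and q: "q < n - 1" "W (k + 1 + int q) = Some m" "a < m"
    and least: "\<And>j b. j < n - 1 \<Longrightarrow> W (k + 1 + int j) = Some b \<Longrightarrow> m \<le> b"
  obtains e c where "\<And>s. s < n - 1 \<Longrightarrow> s \<noteq> q \<Longrightarrow> W (L + int s) = None"
    "W (L + int q) = Some e" "W (L + int (n - 1)) = Some c" "e < c"
proof -
  define top where "top = letter_bound (k + 1) + int n"
  have cT: "covers_at n W L (tail_pattern k top)"
    using tail_pattern_covered_at_first[OF k q(1,2)] q(3) interior_letter_bounds[OF q(1,2)]
    unfolding top_def by simp
  have cM: "covers_at n W L (tail_pattern k m)"
    using tail_pattern_covered_at_first[OF k q(1,2)] q(3) by simp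
  have ncA: "\<not> covers_at n W L (tail_pattern k a)"
    using tail_pattern_not_covered_at_first[OF k(1,2,4)] .
  have qn: "q < n" and n1: "n - 1 < n" using q(1) by auto
  obtain c where c: "W (L + int (n - 1)) = Some c"
  proof (cases "W (L + int (n - 1))")
    case None
    have "covers_at n W L (tail_pattern k a)"
    proof (rule covers_at_cong[OF cM])
      fix s t x y assume "s < n" "t < n" "W (L + int s) = Some x" "W (L + int t) = Some y"
      moreover from this have "s \<noteq> n - 1" "t \<noteq> n - 1" using None by auto
      ultimately show "tail_pattern k m s < tail_pattern k m t \<longleftrightarrow> tail_pattern k a s < tail_pattern k a t"
        by (simp add: tail_pattern_def)
    qed
    with ncA show ?thesis by simp
  qed
  have others: "W (L + int s) = None" if s: "s < n - 1" "s \<noteq> q" for s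
  proof (rule ccontr)
    assume "W (L + int s) \<noteq> None"
    then obtain x where x: "W (L + int s) = Some x" by auto
    have "s < n" using s(1) by simp
    then have "tail_pattern k top s < tail_pattern k top (n - 1) \<longleftrightarrow>
        tail_pattern k m s < tail_pattern k m (n - 1)"
      using covers_atD[OF cT _ n1 x c] covers_atD[OF cM _ n1 x c] by simp
    then show False
      using tail_pattern_extremes(2)[OF s(1), of k top]
        window_pattern_above_least[OF k(2) q(1,2) least s] s(1)
      unfolding top_def by (simp add: tail_pattern_def)
  qed
  obtain e where e: "W (L + int q) = Some e"
  proof (cases "W (L + int q)")
    case None
    have "covers_at n W L (tail_pattern k a)"
    proof (rule covers_at_of_at_most_one_letter)
      fix s t assume "s < n" "t < n" "W (L + int s) \<noteq> None" "W (L + int t) \<noteq> None"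
      moreover have "r = n - 1" if "r < n" "W (L + int r) \<noteq> None" for r
        using None others[of r] that by (cases "r < n - 1"; cases "r = q") auto
      ultimately show "s = t" by metis
    qed
    with ncA show ?thesis by simp
  qed
  have "e < c"
    using covers_atD[OF cM qn n1 e c] q by (simp add: tail_pattern_def window_pattern_def)
  with others e c show ?thesis using that by blast
qed

text \<open>The pattern of the window at \<open>j\<close> with position \<open>q\<close> moved to the bottom would be covered
  both at \<open>j\<close> and at the first window.\<close>

lemma letter_at_first_letter_position:
  assumes shape: "\<And>s. s < n - 1 \<Longrightarrow> s \<noteq> q \<Longrightarrow> W (L + int s) = None"
      "W (L + int q) = Some e" "W (L + int (n - 1)) = Some c" "e < c" "q < n - 1"
    and j: "j \<in> {L..R}" "j \<noteq> L"
  shows "W (j + int q) \<noteq> None"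
proof
  assume none: "W (j + int q) = None"
  define v where "v = (window_pattern j)(q := - 2 * letter_bound j - 1)"
  have qn: "q < n" and n1: "n - 1 < n" using shape(5) by auto
  have low: "v q < v r" if "r < n" "r \<noteq> q" for r
    using window_pattern_bounds[OF that(1), of j] that(2) by (simp add: v_def)
  have inj: "inj_on v {..<n}"
  proof (rule inj_onI)
    fix s t assume st: "s \<in> {..<n}" "t \<in> {..<n}" and eq: "v s = v t"
    show "s = t"
    proof (cases "s = q \<or> t = q")
      case True
      then show ?thesis using low[of s] low[of t] eq st by force
    next
      case False
      then have "window_pattern j s = window_pattern j t" using eq by (simp add: v_def)
      then show ?thesis using inj_onD[OF inj_on_window_pattern[OF j(1)]] st by blast
    qed
  qed
  have "covers_at n W j v"
  proof (rule covers_at_cong[OF covers_at_window_pattern])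
    fix s t x y assume "s < n" "t < n" "W (j + int s) = Some x" "W (j + int t) = Some y"
    then have "s \<noteq> q" "t \<noteq> q" using none by auto
    then show "window_pattern j s < window_pattern j t \<longleftrightarrow> v s < v t" by (simp add: v_def)
  qed
  moreover have "covers_at n W L v"
    unfolding covers_at_def
  proof (intro allI impI)
    fix s t x y assume st: "s < n" "t < n" and xy: "W (L + int s) = Some x" "W (L + int t) = Some y"
    have pos: "r = q \<or> r = n - 1" if "r < n" "W (L + int r) \<noteq> None" for r
      using shape(1)[of r] that by (cases "r < n - 1") auto
    have "s = q \<or> s = n - 1" "t = q \<or> t = n - 1"
      using pos st xy by auto
    moreover have "v q < v (n - 1)"
      using low[OF n1] shape(5) by simp
    ultimately show "x < y \<longleftrightarrow> v s < v t"
      using xy shape(2-5) by (elim disjE) auto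
  qed
  moreover have "L \<in> {L..R}" using j(1) by simp
  ultimately have "j = L" using cover_unique[OF inj j(1)] by blast
  with j(2) show False by simp
qed

lemma no_gap_above_at_first:
  assumes k: "L + 1 \<in> {L..R}" "W L = None" "W (L + int n) = Some a"
    and q: "q < n - 1" "W (L + 1 + int q) = Some m" "a < m"
    and least: "\<And>j b. j < n - 1 \<Longrightarrow> W (L + 1 + int j) = Some b \<Longrightarrow> m \<le> b"
  shows False
proof -
  have L: "L \<in> {L..R}" using k(1) by simp
  obtain e c where others: "\<And>s. s < n - 1 \<Longrightarrow> s \<noteq> q \<Longrightarrow> W (L + int s) = None"
    and e: "W (L + int q) = Some e" and c: "W (L + int (n - 1)) = Some c" and "e < c"
    using first_window_shape[OF L k q] least by blast
  have last: "n - 1 = q + 1"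
  proof (rule ccontr)
    assume "n - 1 \<noteq> q + 1"
    then have "W (L + int (q + 1)) = None" using others[of "q + 1"] q(1) by simp
    then show False using q(2) by (simp add: algebra_simps)
  qed
  then have "c = m" using c q(2) by (simp add: algebra_simps)
  moreover have "m \<le> e"
  proof -
    have "L + 1 + int (q - 1) = L + int q" using last n_ge_3 by simp
    then show ?thesis using least[of "q - 1" e] e q(1) by simp
  qed
  ultimately show False using \<open>e < c\<close> by simp
qed

lemma no_gap_above:
  assumes k: "k \<in> {L..R}" "k + 1 \<in> {L..R}" "W k = None" "W (k + int n) = Some a"
    and above: "\<And>j b. j < n - 1 \<Longrightarrow> W (k + 1 + int j) = Some b \<Longrightarrow> a < b"
    and first: "k = L \<or> W L \<noteq> None \<or> W (L + int n) = None"
  shows False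
proof -
  obtain j b where "j < n - 1" "W (k + 1 + int j) = Some b"
    using gap_succ_window_has_letter[OF k(1-3)] .
  then obtain q m where q: "q < n - 1" "W (k + 1 + int q) = Some m"
    and least: "\<And>j b. j < n - 1 \<Longrightarrow> W (k + 1 + int j) = Some b \<Longrightarrow> m \<le> b"
    using least_interior_letter by blast
  have "a < m" using above q by blast
  show False
  proof (cases "k = L")
    case True
    have "L + 1 \<in> {L..R}" "W L = None" "W (L + int n) = Some a"
      using k True by simp_all
    then show False
      using no_gap_above_at_first[OF _ _ _ q[unfolded True] \<open>a < m\<close>] least[unfolded True] by blast
  next
    case False
    obtain e c where shape: "\<And>s. s < n - 1 \<Longrightarrow> s \<noteq> q \<Longrightarrow> W (L + int s) = None"
      "W (L + int q) = Some e" "W (L + int (n - 1)) = Some c" "e < c"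
      using first_window_shape[OF k q \<open>a < m\<close>] least by blast
    have letter: "W (j + int q) \<noteq> None" if "j \<in> {L..R}" "j \<noteq> L" for j
      using letter_at_first_letter_position[OF _ shape(2-4) q(1) that] shape(1) by blast
    have L1: "L + 1 \<in> {L..R}" and L2: "L + 2 \<in> {L..R}" and "L + 2 \<noteq> L"
      using k False by auto
    \<comment> \<open>The letters at \<open>L + 1 + q\<close> and \<open>L + 2 + q\<close> force \<open>q = n - 2\<close> and make \<open>L\<close> a gap.\<close>
    have last: "n - 1 = q + 1"
    proof (rule ccontr)
      assume "n - 1 \<noteq> q + 1"
      then have "W (L + int (q + 1)) = None" using shape(1)[of "q + 1"] q(1) by simp
      then show False using letter[OF L1] by (simp add: algebra_simps)
    qed
    then have "0 < n - 1" "0 \<noteq> q" using n_ge_3 by auto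
    then have "W L = None" using shape(1)[of 0] by simp
    then have "W (L + int n) = None" using first False by simp
    moreover have "L + int n = L + 2 + int q" using last n_ge_3 by simp
    ultimately show False using letter[OF L2 \<open>L + 2 \<noteq> L\<close>] by simp
  qed
qed

text \<open>The hypothesis \<open>first\<close> excludes a gap at the first window unless it is the gap at \<open>k\<close>
  itself; \<open>no_gap\<close> discharges it by applying this lemma at \<open>L\<close> first.\<close>

lemma no_gap_given_first:
  assumes k: "k \<in> {L..R}" "k + 1 \<in> {L..R}" "W k = None" "W (k + int n) = Some a"
    and first: "k = L \<or> W L \<noteq> None \<or> W (L + int n) = None"
  shows False
proof -
  have ne: "b \<noteq> a" if "j < n - 1" "W (k + 1 + int j) = Some b" for j b
    using interior_letter_ne_last[OF k(2,4) that] .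
  show False
  proof (cases "\<exists>j b. j < n - 1 \<and> W (k + 1 + int j) = Some b \<and> b < a")
    case False
    then have "a < b" if "j < n - 1" "W (k + 1 + int j) = Some b" for j b
      using ne[OF that] that by force
    then show False using no_gap_above[OF k _ first] by blast
  next
    case True
    then obtain j2 b2 where below: "j2 < n - 1" "W (k + 1 + int j2) = Some b2" "b2 < a" by blast
    show False
    proof (cases "\<exists>j b. j < n - 1 \<and> W (k + 1 + int j) = Some b \<and> a < b")
      case True
      then show False using no_gap_two_sided[OF k _ _ _ below] by blast
    next
      case False
      have neg_above: "- a < b"
        if j: "j < n - 1" and b: "map_option uminus (W (k + 1 + int j)) = Some b" for j b
      proof -
        obtain b' where "W (k + 1 + int j) = Some b'" "b = - b'" using b by auto
        then show ?thesis using ne[of j b'] False j by force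
      qed
      interpret neg: interval_cover n "\<lambda>x. map_option uminus (W x)" L R
        using interval_cover_negate pattern_cover_axioms unfolding interval_cover_def by blast
      show False
        by (rule neg.no_gap_above[OF k(1,2), of "- a"]) (use neg_above k(3,4) first in auto)
    qed
  qed
qed

lemma no_gap:
  assumes k: "k \<in> {L..R}" "k + 1 \<in> {L..R}" "W k = None" "W (k + int n) = Some a"
  shows False
proof -
  have L: "L \<in> {L..R}" "L + 1 \<in> {L..R}" using k by auto
  have "W L \<noteq> None \<or> W (L + int n) = None"
  proof (rule ccontr)
    assume "\<not> (W L \<noteq> None \<or> W (L + int n) = None)"
    then obtain a' where "W L = None" "W (L + int n) = Some a'" by auto
    then show False using no_gap_given_first[OF L] by blast
  qed
  then show False using no_gap_given_first[OF k] by blast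
qed

end

section \<open>Partial words and cycles\<close>

definition word_letters :: "pword \<Rightarrow> int \<Rightarrow> int option" where
  "word_letters u x = (if 0 \<le> x \<and> x < int (length u) then map_option int (u ! nat x) else None)"

definition cycle_letters :: "pword \<Rightarrow> int \<Rightarrow> int option" where
  "cycle_letters u x = map_option int (u ! nat (x mod int (length u)))"

lemma coversD:
  "covers f p \<Longrightarrow> i < length f \<Longrightarrow> j < length f \<Longrightarrow> f ! i = Some a \<Longrightarrow> f ! j = Some b
   \<Longrightarrow> a < b \<longleftrightarrow> p ! i < p ! j"
  unfolding covers_def by blast

lemma covers_at_iff_covers:
  assumes len: "length f = n" and inj: "inj_on v {..<n}"
    and window: "\<And>s. s < n \<Longrightarrow> W (i + int s) = map_option int (f ! s)"
  shows "covers_at n W i v \<longleftrightarrow> covers f (perm_of_pattern n v)"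
proof -
  have rank: "perm_of_pattern n v ! s < perm_of_pattern n v ! t \<longleftrightarrow> v s < v t" if "s < n" "t < n" for s t
    using that rank_in_less_iff by (simp add: perm_of_pattern_def)
  show ?thesis
  proof
    assume h: "covers_at n W i v"
    show "covers f (perm_of_pattern n v)"
      unfolding covers_def
    proof (intro conjI allI impI)
      show "length f = length (perm_of_pattern n v)" using len by (simp add: perm_of_pattern_def)
    next
      fix s t a b assume "s < length f" "t < length f" "f ! s = Some a" "f ! t = Some b"
      then show "a < b \<longleftrightarrow> perm_of_pattern n v ! s < perm_of_pattern n v ! t"
        using covers_atD[OF h, of s t "int a" "int b"] window rank len by simp
    qed
  next
    assume h: "covers f (perm_of_pattern n v)"
    show "covers_at n W i v"
      unfolding covers_at_def
    proof (intro allI impI)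
      fix s t a b assume st: "s < n" "t < n" and ab: "W (i + int s) = Some a" "W (i + int t) = Some b"
      obtain a' where a': "f ! s = Some a'" "a = int a'" using ab(1) window[OF st(1)] by auto
      obtain b' where b': "f ! t = Some b'" "b = int b'" using ab(2) window[OF st(2)] by auto
      have "a' < b' \<longleftrightarrow> v s < v t"
        using coversD[OF h _ _ a'(1) b'(1)] st len rank[OF st] by simp
      then show "a < b \<longleftrightarrow> v s < v t" using a'(2) b'(2) by simp
    qed
  qed
qed

lemma distinct_ints_window:
  assumes "distinct_ints f" "length f = n"
    and window: "\<And>s. s < n \<Longrightarrow> W (i + int s) = map_option int (f ! s)"
    and "s < n" "t < n" "W (i + int s) = Some a" "W (i + int t) = Some a"
  shows "s = t"
proof -
  obtain x where x: "f ! s = Some x" "a = int x" using assms(6) window[OF assms(4)] by auto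
  obtain y where y: "f ! t = Some y" "a = int y" using assms(7) window[OF assms(5)] by auto
  then show ?thesis using distinct_ints_nth_eq[OF assms(1) _ _ x(1)] x(2) assms(2,4,5) by simp
qed

lemma word_letters_lfactor:
  assumes "0 \<le> i" "i + int n \<le> int (length u)" "s < n"
  shows "word_letters u (i + int s) = map_option int (lfactor u n (nat i) ! s)"
proof -
  have "nat (i + int s) = nat i + s" using assms(1) by simp
  then show ?thesis using assms unfolding word_letters_def lfactor_def by simp
qed

lemma cycle_letters_cfactor:
  assumes "0 < length u" "s < n"
  shows "cycle_letters u (i + int s) = map_option int (cfactor u n (nat (i mod int (length u))) ! s)"
proof -
  have "(i + int s) mod int (length u) = (i mod int (length u) + int s) mod int (length u)"
    by (simp add: mod_add_left_eq)
  also have "\<dots> = int ((nat (i mod int (length u)) + s) mod length u)"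
    using assms(1) by (simp add: of_nat_mod)
  finally show ?thesis using assms(2) unfolding cycle_letters_def cfactor_def by simp
qed

lemma upword_interval_cover:
  assumes up: "is_upword n u" and "n \<ge> 3"
  shows "interval_cover n (word_letters u) 0 (int (length u) - int n)"
  unfolding interval_cover_def
proof
  let ?I = "{0..int (length u) - int n}"
  have window: "word_letters u (i + int s) = map_option int (lfactor u n (nat i) ! s)"
    if "i \<in> ?I" "s < n" for i s
    using word_letters_lfactor[of i n u s] that by simp
  have covers: "covers_at n (word_letters u) i v \<longleftrightarrow> covers (lfactor u n (nat i)) (perm_of_pattern n v)"
    if "i \<in> ?I" "inj_on v {..<n}" for i v
    using covers_at_iff_covers[OF _ that(2) window[OF that(1)]] by (simp add: lfactor_def)
  show "n \<ge> 3" by fact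
  show "s = t" if "i \<in> ?I" "s < n" "t < n"
    "word_letters u (i + int s) = Some a" "word_letters u (i + int t) = Some a" for i s t a
  proof (rule distinct_ints_window[OF _ _ window[OF that(1)] that(2-5)])
    show "distinct_ints (lfactor u n (nat i))" using up that(1) unfolding is_upword_def by auto
  qed (simp add: lfactor_def)
  show "\<exists>i\<in>?I. covers_at n (word_letters u) i v" if inj: "inj_on v {..<n}" for v
  proof -
    obtain i where "i + n \<le> length u" "covers (lfactor u n i) (perm_of_pattern n v)"
      using up perm_of_pattern_is_nperm[OF inj] unfolding is_upword_def by blast
    then show ?thesis using covers[OF _ inj, of "int i"] by (intro bexI[of _ "int i"]) auto
  qed
  show "i = j" if inj: "inj_on v {..<n}" and ij: "i \<in> ?I" "j \<in> ?I"
    and "covers_at n (word_letters u) i v" "covers_at n (word_letters u) j v" for v i j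
  proof -
    have "\<exists>!i. i + n \<le> length u \<and> covers (lfactor u n i) (perm_of_pattern n v)"
      using up perm_of_pattern_is_nperm[OF inj] unfolding is_upword_def by blast
    moreover have "nat i + n \<le> length u" "nat j + n \<le> length u" using ij by auto
    ultimately have "nat i = nat j" using that covers[OF _ inj] by blast
    then show "i = j" using ij by auto
  qed
qed simp_all

lemma upcycle_pattern_cover:
  assumes up: "is_upcycle n u" and "n \<ge> 3"
  shows "pattern_cover n (cycle_letters u) UNIV (\<lambda>i j. i mod int (length u) = j mod int (length u))"
proof
  let ?r = "\<lambda>i. nat (i mod int (length u))"
  have N: "3 \<le> length u" using up assms(2) unfolding is_upcycle_def by auto
  have N0: "0 < length u" using N by linarith
  have r_less: "?r i < length u" for i
    using N0 by (metis nat_less_iff of_nat_0_less_iff pos_mod_bound pos_mod_sign)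
  have window: "cycle_letters u (i + int s) = map_option int (cfactor u n (?r i) ! s)" if "s < n" for i s
    using cycle_letters_cfactor[OF N0 that] .
  have covers: "covers_at n (cycle_letters u) i v \<longleftrightarrow> covers (cfactor u n (?r i)) (perm_of_pattern n v)"
    if "inj_on v {..<n}" for i v
    using covers_at_iff_covers[OF _ that window] by (simp add: cfactor_def)
  show "n \<ge> 3" by fact
  show "s = t" if "s < n" "t < n"
    "cycle_letters u (i + int s) = Some a" "cycle_letters u (i + int t) = Some a" for i s t a
  proof (rule distinct_ints_window[OF _ _ window that])
    show "distinct_ints (cfactor u n (?r i))" using up r_less unfolding is_upcycle_def by blast
  qed (simp add: cfactor_def)
  show "\<exists>i\<in>UNIV. covers_at n (cycle_letters u) i v" if inj: "inj_on v {..<n}" for v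
  proof -
    obtain i where "i < length u" "covers (cfactor u n i) (perm_of_pattern n v)"
      using up perm_of_pattern_is_nperm[OF inj] unfolding is_upcycle_def by blast
    moreover from this have "?r (int i) = i" by (simp add: nat_mod_as_int)
    ultimately show ?thesis using covers[OF inj, of "int i"] by auto
  qed
  show "i mod int (length u) = j mod int (length u)" if inj: "inj_on v {..<n}"
    and "covers_at n (cycle_letters u) i v" "covers_at n (cycle_letters u) j v" for v i j
  proof -
    have "\<exists>!i. i < length u \<and> covers (cfactor u n i) (perm_of_pattern n v)"
      using up perm_of_pattern_is_nperm[OF inj] unfolding is_upcycle_def by blast
    then have "?r i = ?r j" using that covers[OF inj] r_less by blast
    moreover have "0 \<le> i mod int (length u)" "0 \<le> j mod int (length u)" using N0 by simp_all
    ultimately show ?thesis by simp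
  qed
  show "cycle_letters u (i + x) = cycle_letters u (j + x)"
    if "i mod int (length u) = j mod int (length u)" for i j x
    using that unfolding cycle_letters_def by (metis mod_add_left_eq)
  show "i mod int (length u) \<noteq> (i + 1) mod int (length u)" for i
  proof
    assume "i mod int (length u) = (i + 1) mod int (length u)"
    then have "int (length u) dvd (i - (i + 1))" by (simp add: mod_eq_dvd_iff)
    then show False using N by simp
  qed
  then show "(i + 1) mod int (length u) \<noteq> i mod int (length u)" for i
    by (simp add: eq_commute)
qed

lemma upword_diamond_forward:
  assumes "is_upword n u" "n \<ge> 3" "u ! k = None" "k + n < length u"
  shows "u ! (k + n) = None"
proof (rule ccontr)
  assume "u ! (k + n) \<noteq> None"
  then obtain a where "u ! (k + n) = Some a" by auto
  then have "word_letters u (int k + int n) = Some (int a)"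
    using assms(4) by (simp add: word_letters_def nat_add_distrib)
  moreover have "word_letters u (int k) = None" using assms(3,4) by (simp add: word_letters_def)
  ultimately show False
    using interval_cover.no_gap[OF upword_interval_cover[OF assms(1,2)], of "int k"] assms(4) by auto
qed

lemma upword_diamond_backward:
  assumes "is_upword n u" "n \<ge> 3" "u ! k = None" "k < length u" "n \<le> k"
  shows "u ! (k - n) = None"
proof (rule ccontr)
  assume "u ! (k - n) \<noteq> None"
  then obtain a where a: "u ! (k - n) = Some a" by auto
  let ?W = "\<lambda>x. word_letters u (- x)"
  have rev: "interval_cover n ?W (- (int (length u) - int n) - int n + 1) (- 0 - int n + 1)"
    using interval_cover_reverse[OF upword_interval_cover[OF assms(1,2)]] .
  have "?W (- int k + int n) = Some (int a)"
  proof -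
    have e: "- (- int k + int n) = int (k - n)" using assms(5) by (simp add: of_nat_diff)
    have "word_letters u (int (k - n)) = Some (int a)" using a assms(4) by (simp add: word_letters_def)
    then show ?thesis by (simp only: e)
  qed
  moreover have "word_letters u (int k) = None" using assms(3,4) by (simp add: word_letters_def)
  then have "?W (- int k) = None" by simp
  ultimately show False using interval_cover.no_gap[OF rev, of "- int k"] assms(4,5) by auto
qed

lemma upcycle_diamond_forward:
  assumes "is_upcycle n u" "n \<ge> 3" "k < length u" "u ! k = None"
  shows "u ! ((k + n) mod length u) = None"
proof (rule ccontr)
  assume "u ! ((k + n) mod length u) \<noteq> None"
  then obtain a where a: "u ! ((k + n) mod length u) = Some a" by auto
  have "nat ((int k + int n) mod int (length u)) = (k + n) mod length u"
    by (metis nat_int of_nat_add of_nat_mod)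
  then have "cycle_letters u (int k + int n) = Some (int a)" using a by (simp add: cycle_letters_def)
  moreover have "cycle_letters u (int k) = None"
    using assms(3,4) by (simp add: cycle_letters_def of_nat_mod[symmetric] del: of_nat_mod)
  ultimately show False
    using pattern_cover.no_gap_if_pred_closed[OF upcycle_pattern_cover[OF assms(1,2)], of "int k"] by auto
qed

lemma upcycle_diamond_backward:
  assumes "is_upcycle n u" "n \<ge> 3" "k < length u" "u ! k = None"
  shows "u ! nat ((int k - int n) mod int (length u)) = None"
proof (rule ccontr)
  assume "u ! nat ((int k - int n) mod int (length u)) \<noteq> None"
  then obtain a where a: "u ! nat ((int k - int n) mod int (length u)) = Some a" by auto
  let ?W = "\<lambda>x. cycle_letters u (- x)"
  have "surj (\<lambda>i. - i - int n + 1)"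
    by (rule surjI[of _ "\<lambda>i. - i - int n + 1"]) simp
  then have "pattern_cover n ?W UNIV
      (\<lambda>i j. (- i - int n + 1) mod int (length u) = (- j - int n + 1) mod int (length u))"
    using pattern_cover_reverse[OF upcycle_pattern_cover[OF assms(1,2)]] by simp
  moreover have "?W (- int k + int n) = Some (int a)"
    using a by (simp add: cycle_letters_def algebra_simps)
  moreover have "cycle_letters u (int k) = None"
    using assms(3,4) by (simp add: cycle_letters_def of_nat_mod[symmetric] del: of_nat_mod)
  then have "?W (- int k) = None" by simp
  ultimately show False
    using pattern_cover.no_gap_if_pred_closed[of n ?W UNIV _ "- int k"] by auto
qed

theorem lemma5:
  fixes n k :: nat and u :: pword
  assumes "n \<ge> 3"
  shows "(is_upword n u \<longrightarrow> k < length u \<longrightarrow> u ! k = None \<longrightarrow>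
            (k + n < length u \<longrightarrow> u ! (k + n) = None) \<and>
            (n \<le> k \<longrightarrow> u ! (k - n) = None))
       \<and> (is_upcycle n u \<longrightarrow> k < length u \<longrightarrow> u ! k = None \<longrightarrow>
            u ! ((k + n) mod length u) = None \<and>
            u ! nat ((int k - int n) mod int (length u)) = None)"
  using assms upword_diamond_forward upword_diamond_backward
    upcycle_diamond_forward upcycle_diamond_backward by blast

end
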